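(* For all $\lambda$-terms $M,N$: $M\simeq_{\beta_v}N$ iff $M^v\simeq_b N^v$.
   Context: Bang calculus. The set $!\Lambda$ of terms is $T,S ::= x \mid \lambda x.T \mid T\,S \mid \mathrm{der}\,T \mid\ !T$; $\lambda$ the only binder, up to $\alpha$-conversion, $T\{S/x\}$ capture-avoiding substitution. Contexts: $C ::= [\cdot] \mid \lambda x.C \mid C\,T \mid T\,C \mid \mathrm{der}\,C \mid\ !C$. Root steps $(\lambda x.T)(!S)\mapsto_v T\{S/x\}$, $\mathrm{der}(!T)\mapsto_d T$; $\to_b$ is the closure of $\mapsto_v\cup\mapsto_d$ under contexts. $\lambda$-calculus: $M ::= V\mid MN$, values $V ::= x\mid\lambda x.M$; $\to_{\beta_v}$ is the closure of $(\lambda x.M)V\mapsto_{\beta_v}M\{V/x\}$ ($V$ a value) under $\lambda$-contexts $C ::= [\cdot]\mid\lambda x.C\mid C\,M\mid M\,C$. CbV translation: $x^v=\,!x$, $(\lambda x.M)^v=\,!(\lambda x.M^v)$, $(MN)^v=(\mathrm{der}\,M^v)\,N^v$. For a relation $\to_r$, $\simeq_r$ denotes its reflexive-symmetric-transitive closure. *)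

theory Defs
  imports Main
begin

text \<open>Terms up to alpha-conversion are represented with de Bruijn indices.\<close>

datatype lterm = LVar nat | LAbs lterm | LApp lterm lterm

datatype bterm = BVar nat | BAbs bterm | BApp bterm bterm | Der bterm | Bang bterm

primrec llift :: "lterm \<Rightarrow> nat \<Rightarrow> lterm" where
  "llift (LVar i) k = (if i < k then LVar i else LVar (Suc i))"
| "llift (LAbs s) k = LAbs (llift s (Suc k))"
| "llift (LApp s t) k = LApp (llift s k) (llift t k)"

primrec lsubst :: "lterm \<Rightarrow> lterm \<Rightarrow> nat \<Rightarrow> lterm" where
  "lsubst (LVar i) s k =
     (if k < i then LVar (i - 1) else if i = k then s else LVar i)"
| "lsubst (LAbs t) s k = LAbs (lsubst t (llift s 0) (Suc k))"
| "lsubst (LApp t u) s k = LApp (lsubst t s k) (lsubst u s k)"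

primrec blift :: "bterm \<Rightarrow> nat \<Rightarrow> bterm" where
  "blift (BVar i) k = (if i < k then BVar i else BVar (Suc i))"
| "blift (BAbs s) k = BAbs (blift s (Suc k))"
| "blift (BApp s t) k = BApp (blift s k) (blift t k)"
| "blift (Der s) k = Der (blift s k)"
| "blift (Bang s) k = Bang (blift s k)"

primrec bsubst :: "bterm \<Rightarrow> bterm \<Rightarrow> nat \<Rightarrow> bterm" where
  "bsubst (BVar i) s k =
     (if k < i then BVar (i - 1) else if i = k then s else BVar i)"
| "bsubst (BAbs t) s k = BAbs (bsubst t (blift s 0) (Suc k))"
| "bsubst (BApp t u) s k = BApp (bsubst t s k) (bsubst u s k)"
| "bsubst (Der t) s k = Der (bsubst t s k)"
| "bsubst (Bang t) s k = Bang (bsubst t s k)"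

primrec is_value :: "lterm \<Rightarrow> bool" where
  "is_value (LVar _) = True"
| "is_value (LAbs _) = True"
| "is_value (LApp _ _) = False"

inductive beta_v :: "lterm \<Rightarrow> lterm \<Rightarrow> bool" where
  root: "is_value V \<Longrightarrow> beta_v (LApp (LAbs M) V) (lsubst M V 0)"
| abs: "beta_v M M' \<Longrightarrow> beta_v (LAbs M) (LAbs M')"
| appL: "beta_v M M' \<Longrightarrow> beta_v (LApp M N) (LApp M' N)"
| appR: "beta_v N N' \<Longrightarrow> beta_v (LApp M N) (LApp M N')"

inductive bstep :: "bterm \<Rightarrow> bterm \<Rightarrow> bool" where
  root_v: "bstep (BApp (BAbs T) (Bang S)) (bsubst T S 0)"
| root_d: "bstep (Der (Bang T)) T"
| abs: "bstep T T' \<Longrightarrow> bstep (BAbs T) (BAbs T')"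
| appL: "bstep T T' \<Longrightarrow> bstep (BApp T S) (BApp T' S)"
| appR: "bstep S S' \<Longrightarrow> bstep (BApp T S) (BApp T S')"
| der: "bstep T T' \<Longrightarrow> bstep (Der T) (Der T')"
| bang: "bstep T T' \<Longrightarrow> bstep (Bang T) (Bang T')"

primrec cbv :: "lterm \<Rightarrow> bterm" where
  "cbv (LVar i) = Bang (BVar i)"
| "cbv (LAbs M) = Bang (BAbs (cbv M))"
| "cbv (LApp M N) = BApp (Der (cbv M)) (cbv N)"

end

theory Submission
  imports Defs "HOL-Library.Confluence"
begin

text \<open>
  A \<open>\<beta>\<^sub>v\<close>-step \<open>(\<lambda>x.M) V \<rightarrow> M{V/x}\<close> is simulated by a \<open>d\<close>-step followed by a \<open>v\<close>-step on the
  translations, which gives one direction. For the converse, \<open>\<rightarrow>\<^sub>b\<close> is confluent (parallel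
  reduction together with Takahashi's complete development), so convertible translations
  have a common reduct. Erasing all \<open>der\<close> and \<open>!\<close> maps \<open>b\<close>-reductions to \<open>\<beta>\<^sub>v\<close>-reductions as long
  as \<open>!\<close> only guards variables and abstractions; translations have this shape, \<open>\<rightarrow>\<^sub>b\<close>
  preserves it, and the erasure of \<open>M\<^sup>v\<close> is \<open>M\<close>.
\<close>

lemma rtranclp_simulation:
  assumes "R\<^sup>*\<^sup>* x y" and "I x"
    and "\<And>x y. R x y \<Longrightarrow> I x \<Longrightarrow> I y"
    and "\<And>x y. R x y \<Longrightarrow> I x \<Longrightarrow> S\<^sup>*\<^sup>* (f x) (f y)"
  shows "S\<^sup>*\<^sup>* (f x) (f y)"
  using assms(1,2)
proof (induction rule: rtranclp_induct)
  case (step y z)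
  have "I y" using step.hyps(1) step.prems assms(3) by (induction rule: rtranclp_induct) auto
  then show ?case using step assms(4) by (meson rtranclp_trans)
qed simp

lemma rtranclp_map:
  assumes "R\<^sup>*\<^sup>* x y" and "\<And>x y. R x y \<Longrightarrow> S\<^sup>*\<^sup>* (f x) (f y)"
  shows "S\<^sup>*\<^sup>* (f x) (f y)"
  using assms(1) by (rule rtranclp_simulation[where I = "\<lambda>_. True"]) (auto intro: assms(2))

lemma equivclp_map:
  assumes "equivclp R x y" and "\<And>x y. R x y \<Longrightarrow> S\<^sup>*\<^sup>* (f x) (f y)"
  shows "equivclp S (f x) (f y)"
  using assms(1)
proof (induction rule: equivclp_induct)
  case (step y z)
  have "equivclp S (f y) (f z)"
    using step.hyps(2) assms(2)
    by (auto intro: rtranclp_into_equivclp converse_rtranclp_into_equivclp)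
  then show ?case using step.IH by (rule equivclp_trans[rotated])
qed simp

lemma strong_confluentp_if_triangle:
  assumes "\<And>a b. P a b \<Longrightarrow> P b (f a)"
  shows "strong_confluentp P"
proof (rule strong_confluentpI)
  fix x y z
  assume "P x y" and "P x z"
  then show "\<exists>u. P\<^sup>*\<^sup>* y u \<and> P\<^sup>=\<^sup>= z u"
    using assms by blast
qed

lemma confluentp_if_rtranclp_eq:
  "R\<^sup>*\<^sup>* = S\<^sup>*\<^sup>* \<Longrightarrow> confluentp S \<Longrightarrow> confluentp R"
  by (simp add: confluentp_def rtranclp_conversep)

lemma equivclp_imp_joinable:
  assumes "confluentp R" and "equivclp R x y"
  shows "\<exists>z. R\<^sup>*\<^sup>* x z \<and> R\<^sup>*\<^sup>* y z"
proof -
  have "equivclp R = R\<^sup>*\<^sup>* OO R\<inverse>\<inverse>\<^sup>*\<^sup>*"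
    using assms(1) by (intro semiconfluentp_equivclp confluentp_imp_semiconfluentp)
  then show ?thesis using assms(2) by (auto simp: rtranclp_conversep)
qed

declare bsubst.simps(1)[simp del]

lemma bsubst_BVar_gt [simp]: "i < j \<Longrightarrow> bsubst (BVar j) u i = BVar (j - 1)"
  by (simp add: bsubst.simps(1))

lemma bsubst_BVar_lt [simp]: "j < i \<Longrightarrow> bsubst (BVar j) u i = BVar j"
  by (simp add: bsubst.simps(1))

lemma blift_blift:
  "i < k + 1 \<Longrightarrow> blift (blift t i) (Suc k) = blift (blift t k) i"
  by (induct t arbitrary: i k) auto

lemma blift_bsubst [simp]:
  "j < i + 1 \<Longrightarrow> blift (bsubst t s j) i = bsubst (blift t (i + 1)) (blift s i) j"
  by (induct t arbitrary: i j s)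
    (simp_all add: diff_Suc bsubst.simps(1) blift_blift split: nat.split)

lemma blift_bsubst_lt:
  "i < j + 1 \<Longrightarrow> blift (bsubst t s j) i = bsubst (blift t i) (blift s i) (j + 1)"
  by (induct t arbitrary: i j s) (auto simp add: bsubst.simps(1) blift_blift)

lemma bsubst_blift [simp]: "bsubst (blift t k) s k = t"
  by (induct t arbitrary: k s) simp_all

lemma bsubst_bsubst:
  "i < j + 1 \<Longrightarrow>
    bsubst (bsubst t (blift v i) (Suc j)) (bsubst u v j) i = bsubst (bsubst t u i) v j"
  by (induct t arbitrary: i j u v)
    (simp_all add: diff_Suc bsubst.simps(1) blift_blift [symmetric] blift_bsubst_lt
      split: nat.split)

subsection \<open>Confluence of the bang calculus\<close>

inductive par_bstep :: "bterm \<Rightarrow> bterm \<Rightarrow> bool" where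
  var [simp, intro!]: "par_bstep (BVar n) (BVar n)"
| abs [simp, intro!]: "par_bstep s t \<Longrightarrow> par_bstep (BAbs s) (BAbs t)"
| app [simp, intro!]:
    "par_bstep s s' \<Longrightarrow> par_bstep t t' \<Longrightarrow> par_bstep (BApp s t) (BApp s' t')"
| der [simp, intro!]: "par_bstep s t \<Longrightarrow> par_bstep (Der s) (Der t)"
| bang [simp, intro!]: "par_bstep s t \<Longrightarrow> par_bstep (Bang s) (Bang t)"
| root_v [simp, intro!]:
    "par_bstep s s' \<Longrightarrow> par_bstep t t' \<Longrightarrow>
      par_bstep (BApp (BAbs s) (Bang t)) (bsubst s' t' 0)"
| root_d [simp, intro!]: "par_bstep s t \<Longrightarrow> par_bstep (Der (Bang s)) t"

inductive_cases par_bstep_cases: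
  "par_bstep (BVar n) t"
  "par_bstep (BAbs s) t"
  "par_bstep (BApp s t) u"
  "par_bstep (Der s) t"
  "par_bstep (Bang s) t"

lemma par_bstep_refl [simp]: "par_bstep t t"
  by (induct t) simp_all

lemma bstep_imp_par_bstep: "bstep s t \<Longrightarrow> par_bstep s t"
  by (induct rule: bstep.induct) auto

lemma bsteps_BAbs: "bstep\<^sup>*\<^sup>* s s' \<Longrightarrow> bstep\<^sup>*\<^sup>* (BAbs s) (BAbs s')"
  by (erule rtranclp_map[where f = BAbs]) (meson r_into_rtranclp bstep.abs)

lemma bsteps_Der: "bstep\<^sup>*\<^sup>* s s' \<Longrightarrow> bstep\<^sup>*\<^sup>* (Der s) (Der s')"
  by (erule rtranclp_map[where f = Der]) (meson r_into_rtranclp bstep.der)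

lemma bsteps_Bang: "bstep\<^sup>*\<^sup>* s s' \<Longrightarrow> bstep\<^sup>*\<^sup>* (Bang s) (Bang s')"
  by (erule rtranclp_map[where f = Bang]) (meson r_into_rtranclp bstep.bang)

lemma bsteps_BApp:
  assumes "bstep\<^sup>*\<^sup>* s s'" and "bstep\<^sup>*\<^sup>* t t'"
  shows "bstep\<^sup>*\<^sup>* (BApp s t) (BApp s' t')"
proof -
  have "bstep\<^sup>*\<^sup>* (BApp s t) (BApp s' t)"
    using assms(1)
    by (rule rtranclp_map[where f = "\<lambda>s. BApp s t"]) (meson r_into_rtranclp bstep.appL)
  also have "bstep\<^sup>*\<^sup>* (BApp s' t) (BApp s' t')"
    using assms(2)
    by (rule rtranclp_map[where f = "BApp s'"]) (meson r_into_rtranclp bstep.appR)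
  finally show ?thesis .
qed

lemma par_bstep_imp_bsteps: "par_bstep s t \<Longrightarrow> bstep\<^sup>*\<^sup>* s t"
proof (induct rule: par_bstep.induct)
  case (root_v s s' t t')
  then have "bstep\<^sup>*\<^sup>* (BApp (BAbs s) (Bang t)) (BApp (BAbs s') (Bang t'))"
    by (simp add: bsteps_BApp bsteps_BAbs bsteps_Bang)
  then show ?case by (meson bstep.root_v rtranclp.rtrancl_into_rtrancl)
next
  case (root_d s t)
  then have "bstep\<^sup>*\<^sup>* (Der (Bang s)) (Der (Bang t))"
    by (simp add: bsteps_Der bsteps_Bang)
  then show ?case by (meson bstep.root_d rtranclp.rtrancl_into_rtrancl)
qed (auto intro: bsteps_BApp bsteps_BAbs bsteps_Der bsteps_Bang)

lemma rtranclp_par_bstep_eq: "par_bstep\<^sup>*\<^sup>* = bstep\<^sup>*\<^sup>*"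
  by (rule rtranclp_subset) (auto intro: bstep_imp_par_bstep par_bstep_imp_bsteps)

lemma par_bstep_blift [simp]: "par_bstep t t' \<Longrightarrow> par_bstep (blift t n) (blift t' n)"
proof (induct arbitrary: n rule: par_bstep.induct)
  case (root_v s s' t t')
  then show ?case using par_bstep.root_v[OF root_v(2)[of "Suc n"] root_v(4)[of n]] by simp
qed auto

lemma par_bstep_bsubst:
  "par_bstep t t' \<Longrightarrow> par_bstep s s' \<Longrightarrow> par_bstep (bsubst t s n) (bsubst t' s' n)"
proof (induct arbitrary: s s' n rule: par_bstep.induct)
  case (var m)
  then show ?case by (simp add: bsubst.simps(1))
next
  case (root_v t t' u u')
  then have "par_bstep (bsubst (BApp (BAbs t) (Bang u)) s n)
      (bsubst (bsubst t' (blift s' 0) (Suc n)) (bsubst u' s' n) 0)"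
    by simp
  then show ?case by (simp add: bsubst_bsubst)
qed auto

fun complete_dev :: "bterm \<Rightarrow> bterm" where
  "complete_dev (BVar n) = BVar n"
| "complete_dev (BApp (BAbs u) (Bang t)) = bsubst (complete_dev u) (complete_dev t) 0"
| "complete_dev (BApp s t) = BApp (complete_dev s) (complete_dev t)"
| "complete_dev (Der (Bang t)) = complete_dev t"
| "complete_dev (Der t) = Der (complete_dev t)"
| "complete_dev (BAbs s) = BAbs (complete_dev s)"
| "complete_dev (Bang s) = Bang (complete_dev s)"

lemma complete_dev_BApp:
  "\<nexists>u v. s = BAbs u \<and> t = Bang v \<Longrightarrow>
    complete_dev (BApp s t) = BApp (complete_dev s) (complete_dev t)"
  by (cases s; cases t) auto

lemma complete_dev_Der:
  "\<nexists>v. t = Bang v \<Longrightarrow> complete_dev (Der t) = Der (complete_dev t)"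
  by (cases t) auto

lemma par_bstep_complete_dev: "par_bstep s t \<Longrightarrow> par_bstep t (complete_dev s)"
proof (induct rule: par_bstep.induct)
  case (app s s' t t')
  show ?case
  proof (cases "\<exists>u v. s = BAbs u \<and> t = Bang v")
    case True
    then obtain u v where uv: "s = BAbs u" "t = Bang v" by blast
    from app.hyps(1) uv obtain u' where u': "s' = BAbs u'" "par_bstep u u'"
      by (blast elim: par_bstep_cases)
    from app.hyps(3) uv obtain v' where v': "t' = Bang v'" "par_bstep v v'"
      by (blast elim: par_bstep_cases)
    from app.hyps(2) uv u' have "par_bstep u' (complete_dev u)"
      by (auto elim: par_bstep_cases)
    moreover from app.hyps(4) uv v' have "par_bstep v' (complete_dev v)"
      by (auto elim: par_bstep_cases)
    ultimately show ?thesis using uv u' v' by simp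
  next
    case False
    then show ?thesis using app by (simp add: complete_dev_BApp)
  qed
next
  case (der s t)
  show ?case
  proof (cases "\<exists>v. s = Bang v")
    case True
    then obtain v where v: "s = Bang v" by blast
    from der.hyps(1) v obtain v' where v': "t = Bang v'" by (blast elim: par_bstep_cases)
    from der.hyps(2) v v' have "par_bstep v' (complete_dev v)" by (auto elim: par_bstep_cases)
    then show ?thesis using v v' by simp
  next
    case False
    then show ?thesis using der by (simp add: complete_dev_Der)
  qed
qed (simp_all add: par_bstep_bsubst)

lemma confluentp_bstep: "confluentp bstep"
proof -
  have "strong_confluentp par_bstep"
    by (rule strong_confluentp_if_triangle) (rule par_bstep_complete_dev)
  then have "confluentp par_bstep" by (rule strong_confluentp_imp_confluentp)
  then show ?thesis by (rule confluentp_if_rtranclp_eq[OF rtranclp_par_bstep_eq[symmetric]])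
qed

subsection \<open>Simulation of \<open>\<beta>\<^sub>v\<close> by the translation\<close>

text \<open>The translation of a value without its outer \<open>!\<close>; the application clause is junk.\<close>

primrec cbv_val :: "lterm \<Rightarrow> bterm" where
  "cbv_val (LVar i) = BVar i"
| "cbv_val (LAbs M) = BAbs (cbv M)"
| "cbv_val (LApp M N) = BApp (cbv M) (cbv N)"

lemma cbv_llift [simp]: "cbv (llift M k) = blift (cbv M) k"
  by (induct M arbitrary: k) simp_all

lemma cbv_val_llift [simp]: "cbv_val (llift M k) = blift (cbv_val M) k"
  by (cases M) simp_all

lemma cbv_value: "is_value V \<Longrightarrow> cbv V = Bang (cbv_val V)"
  by (cases V) simp_all

lemma is_value_llift: "is_value V \<Longrightarrow> is_value (llift V k)"
  by (cases V) simp_all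

lemma cbv_lsubst: "is_value V \<Longrightarrow> cbv (lsubst M V k) = bsubst (cbv M) (cbv_val V) k"
  by (induct M arbitrary: V k) (auto simp: bsubst.simps(1) cbv_value is_value_llift)

lemma beta_v_imp_bsteps_cbv: "beta_v M N \<Longrightarrow> bstep\<^sup>*\<^sup>* (cbv M) (cbv N)"
proof (induct rule: beta_v.induct)
  case (root V M)
  then have "bstep (cbv (LApp (LAbs M) V)) (BApp (BAbs (cbv M)) (Bang (cbv_val V)))"
    by (simp add: cbv_value bstep.appL bstep.root_d)
  moreover have "bstep (BApp (BAbs (cbv M)) (Bang (cbv_val V))) (cbv (lsubst M V 0))"
    using root by (simp add: cbv_lsubst bstep.root_v)
  ultimately show ?case by (meson rtranclp.rtrancl_into_rtrancl r_into_rtranclp)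
qed (auto intro: bsteps_Bang bsteps_BAbs bsteps_BApp bsteps_Der)

subsection \<open>Erasure of \<open>der\<close> and \<open>!\<close>\<close>

primrec erase :: "bterm \<Rightarrow> lterm" where
  "erase (BVar i) = LVar i"
| "erase (BAbs t) = LAbs (erase t)"
| "erase (BApp t s) = LApp (erase t) (erase s)"
| "erase (Der t) = erase t"
| "erase (Bang t) = erase t"

primrec is_bvalue :: "bterm \<Rightarrow> bool" where
  "is_bvalue (BVar _) = True"
| "is_bvalue (BAbs _) = True"
| "is_bvalue (BApp _ _) = False"
| "is_bvalue (Der _) = False"
| "is_bvalue (Bang _) = False"

primrec bang_values :: "bterm \<Rightarrow> bool" where
  "bang_values (BVar _) = True"
| "bang_values (BAbs t) = bang_values t"
| "bang_values (BApp t s) = (bang_values t \<and> bang_values s)"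
| "bang_values (Der t) = bang_values t"
| "bang_values (Bang t) = (is_bvalue t \<and> bang_values t)"

lemma erase_cbv [simp]: "erase (cbv M) = M"
  by (induct M) simp_all

lemma bang_values_cbv: "bang_values (cbv M)"
  by (induct M) simp_all

lemma erase_blift [simp]: "erase (blift t k) = llift (erase t) k"
  by (induct t arbitrary: k) simp_all

lemma erase_bsubst: "erase (bsubst t s k) = lsubst (erase t) (erase s) k"
  by (induct t arbitrary: s k) (simp_all add: bsubst.simps(1))

lemma is_bvalue_blift [simp]: "is_bvalue (blift t k) = is_bvalue t"
  by (cases t) simp_all

lemma bang_values_blift [simp]: "bang_values (blift t k) = bang_values t"
  by (induct t arbitrary: k) simp_all

lemma is_bvalue_bsubst: "is_bvalue t \<Longrightarrow> is_bvalue s \<Longrightarrow> is_bvalue (bsubst t s k)"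
  by (cases t) (simp_all add: bsubst.simps(1))

lemma bang_values_bsubst:
  "bang_values t \<Longrightarrow> bang_values s \<Longrightarrow> is_bvalue s \<Longrightarrow> bang_values (bsubst t s k)"
  by (induct t arbitrary: s k) (simp_all add: bsubst.simps(1) is_bvalue_bsubst)

lemma is_bvalue_bstep: "bstep t t' \<Longrightarrow> is_bvalue t \<Longrightarrow> is_bvalue t'"
  by (induct rule: bstep.induct) simp_all

lemma bang_values_bstep: "bstep t t' \<Longrightarrow> bang_values t \<Longrightarrow> bang_values t'"
  by (induct rule: bstep.induct) (auto simp: bang_values_bsubst is_bvalue_bstep)

lemma is_value_erase: "is_bvalue t \<Longrightarrow> is_value (erase t)"
  by (cases t) simp_all

lemma beta_vs_LAbs: "beta_v\<^sup>*\<^sup>* s s' \<Longrightarrow> beta_v\<^sup>*\<^sup>* (LAbs s) (LAbs s')"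
  by (erule rtranclp_map[where f = LAbs]) (meson r_into_rtranclp beta_v.abs)

lemma beta_vs_LApp1: "beta_v\<^sup>*\<^sup>* s s' \<Longrightarrow> beta_v\<^sup>*\<^sup>* (LApp s t) (LApp s' t)"
  by (erule rtranclp_map[where f = "\<lambda>s. LApp s t"]) (meson r_into_rtranclp beta_v.appL)

lemma beta_vs_LApp2: "beta_v\<^sup>*\<^sup>* t t' \<Longrightarrow> beta_v\<^sup>*\<^sup>* (LApp s t) (LApp s t')"
  by (erule rtranclp_map[where f = "LApp s"]) (meson r_into_rtranclp beta_v.appR)

lemma erase_bstep: "bstep t t' \<Longrightarrow> bang_values t \<Longrightarrow> beta_v\<^sup>*\<^sup>* (erase t) (erase t')"
proof (induct rule: bstep.induct)
  case (root_v T S)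
  then have "beta_v (LApp (LAbs (erase T)) (erase S)) (lsubst (erase T) (erase S) 0)"
    by (simp add: beta_v.root is_value_erase)
  then show ?case by (simp add: erase_bsubst)
qed (auto intro: beta_vs_LAbs beta_vs_LApp1 beta_vs_LApp2)

lemma erase_bsteps_cbv:
  assumes "bstep\<^sup>*\<^sup>* (cbv M) t"
  shows "beta_v\<^sup>*\<^sup>* M (erase t)"
proof -
  have "beta_v\<^sup>*\<^sup>* (erase (cbv M)) (erase t)"
    using assms bang_values_cbv
    by (rule rtranclp_simulation[where I = bang_values])
      (simp_all add: bang_values_bstep erase_bstep)
  then show ?thesis by simp
qed

theorem mainTheorem10:
  "equivclp beta_v M N \<longleftrightarrow> equivclp bstep (cbv M) (cbv N)"
proof
  assume "equivclp beta_v M N"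
  then show "equivclp bstep (cbv M) (cbv N)"
    by (rule equivclp_map[where f = cbv]) (rule beta_v_imp_bsteps_cbv)
next
  assume "equivclp bstep (cbv M) (cbv N)"
  then obtain t where "bstep\<^sup>*\<^sup>* (cbv M) t" and "bstep\<^sup>*\<^sup>* (cbv N) t"
    using equivclp_imp_joinable[OF confluentp_bstep] by blast
  then have "beta_v\<^sup>*\<^sup>* M (erase t)" and "beta_v\<^sup>*\<^sup>* N (erase t)"
    by (simp_all add: erase_bsteps_cbv)
  then have "equivclp beta_v M (erase t)" and "equivclp beta_v (erase t) N"
    by (simp_all add: rtranclp_into_equivclp converse_rtranclp_into_equivclp)
  then show "equivclp beta_v M N" by (rule equivclp_trans)
qed

end
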